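(* For every reachable pointed lasso automaton $X=(X_1,X_2,\overline{x},\delta_1,\delta_2,\delta_3)$, the pair $(\ker\delta_1^\sharp,\ker\delta^\sharp)$ is a bisimulation congruence on $(\Sigma^\ast,\Sigma^{\ast+})$; and if there is a morphism $h:X\to Y$ between reachable pointed lasso automata, then $\ker\delta_{X,1}^\sharp\subseteq\ker\delta_{Y,1}^\sharp$ and $\ker\delta_X^\sharp\subseteq\ker\delta_Y^\sharp$. (That is, $T(X)=(\ker\delta_1^\sharp,\ker\delta^\sharp)$ defines a functor $T$ from reachable pointed lasso automata to bisimulation congruences ordered by inclusion.)
   Context: $\Sigma$ is a finite alphabet, $\Sigma^+$ nonempty words, $\Sigma^{\ast+}=\Sigma^\ast\times\Sigma^+$ the lassos. A pointed lasso automaton is $(X_1,X_2,\overline{x},\delta_1,\delta_2,\delta_3)$ with disjoint $X_1,X_2$, $\overline{x}\in X_1$, $\delta_1:X_1\times\Sigma\to X_1$, $\delta_2:X_1\times\Sigma\to X_2$, $\delta_3:X_2\times\Sigma\to X_2$. Extend $\delta_1,\delta_3$ to words, set $\delta_\circ(x,av)=\delta_3(\delta_2(x,a),v)$ for $x\in X_1$, and $\delta(x,(u,v))=\delta_\circ(\delta_1(x,u),v)$. It is reachable if every $x\in X_1$ is $\delta_1(\overline{x},w)$ for some $w\in\Sigma^\ast$ and every $y\in X_2$ is $\delta(\overline{x},(u,v))$ for some lasso. A morphism is a pair of maps $h_1:X_1\to Y_1$, $h_2:X_2\to Y_2$ preserving initial states and commuting with $\delta_1,\delta_2,\delta_3$.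 $\ker\delta_1^\sharp=\{(u,v)\in\Sigma^\ast\times\Sigma^\ast\mid\forall x\in X_1:\delta_1(x,u)=\delta_1(x,v)\}$, $\ker\delta^\sharp=\{((u,v),(u',v'))\in\Sigma^{\ast+}\times\Sigma^{\ast+}\mid\forall x\in X_1:\delta(x,(u,v))=\delta(x,(u',v'))\}$. A bisimulation congruence is a pair $(C_1,C_2)$ of equivalence relations on $\Sigma^\ast$ and $\Sigma^{\ast+}$ such that: $C_1$ is a monoid congruence on $\Sigma^\ast$; $(w,w')\in C_1$ and $((u,v),(u',v'))\in C_2$ imply $((wu,v),(w'u',v'))\in C_2$; $(u,u')\in C_1$ implies $(ua,u'a)\in C_1$ and $((u,a),(u',a))\in C_2$ for $a\in\Sigma$; $((u,v),(u',v'))\in C_2$ implies $((u,va),(u',v'a))\in C_2$. *)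

theory Defs
  imports Main
begin

definition lassos :: "('a list \<times> 'a list) set" where
  "lassos = {(u, v). v \<noteq> []}"

text \<open>A pointed lasso automaton is given by its components; X1 and X2 are the
  (disjoint) carrier types 'x1 and 'x2.\<close>

definition delta1w :: "('x1 \<Rightarrow> 'a \<Rightarrow> 'x1) \<Rightarrow> 'x1 \<Rightarrow> 'a list \<Rightarrow> 'x1" where
  "delta1w d1 x w = foldl d1 x w"

definition delta3w :: "('x2 \<Rightarrow> 'a \<Rightarrow> 'x2) \<Rightarrow> 'x2 \<Rightarrow> 'a list \<Rightarrow> 'x2" where
  "delta3w d3 y w = foldl d3 y w"

fun delta_circ :: "('x1 \<Rightarrow> 'a \<Rightarrow> 'x2) \<Rightarrow> ('x2 \<Rightarrow> 'a \<Rightarrow> 'x2) \<Rightarrow> 'x1 \<Rightarrow> 'a list \<Rightarrow> 'x2" where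
  "delta_circ d2 d3 x (a # v) = delta3w d3 (d2 x a) v"
| "delta_circ d2 d3 x [] = undefined"

definition delta_lasso ::
  "('x1 \<Rightarrow> 'a \<Rightarrow> 'x1) \<Rightarrow> ('x1 \<Rightarrow> 'a \<Rightarrow> 'x2) \<Rightarrow> ('x2 \<Rightarrow> 'a \<Rightarrow> 'x2) \<Rightarrow> 'x1 \<Rightarrow> 'a list \<times> 'a list \<Rightarrow> 'x2" where
  "delta_lasso d1 d2 d3 x uv = delta_circ d2 d3 (delta1w d1 x (fst uv)) (snd uv)"

definition reachable_pla ::
  "'x1 \<Rightarrow> ('x1 \<Rightarrow> 'a \<Rightarrow> 'x1) \<Rightarrow> ('x1 \<Rightarrow> 'a \<Rightarrow> 'x2) \<Rightarrow> ('x2 \<Rightarrow> 'a \<Rightarrow> 'x2) \<Rightarrow> bool" where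
  "reachable_pla x0 d1 d2 d3 \<longleftrightarrow>
     (\<forall>x::'x1. \<exists>w. x = delta1w d1 x0 w) \<and>
     (\<forall>y::'x2. \<exists>uv\<in>lassos. y = delta_lasso d1 d2 d3 x0 uv)"

definition pla_morphism ::
  "'x1 \<Rightarrow> ('x1 \<Rightarrow> 'a \<Rightarrow> 'x1) \<Rightarrow> ('x1 \<Rightarrow> 'a \<Rightarrow> 'x2) \<Rightarrow> ('x2 \<Rightarrow> 'a \<Rightarrow> 'x2) \<Rightarrow>
   'y1 \<Rightarrow> ('y1 \<Rightarrow> 'a \<Rightarrow> 'y1) \<Rightarrow> ('y1 \<Rightarrow> 'a \<Rightarrow> 'y2) \<Rightarrow> ('y2 \<Rightarrow> 'a \<Rightarrow> 'y2) \<Rightarrow>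
   ('x1 \<Rightarrow> 'y1) \<Rightarrow> ('x2 \<Rightarrow> 'y2) \<Rightarrow> bool" where
  "pla_morphism x0 d1 d2 d3 y0 e1 e2 e3 h1 h2 \<longleftrightarrow>
     h1 x0 = y0 \<and>
     (\<forall>x a. h1 (d1 x a) = e1 (h1 x) a) \<and>
     (\<forall>x a. h2 (d2 x a) = e2 (h1 x) a) \<and>
     (\<forall>y a. h2 (d3 y a) = e3 (h2 y) a)"

definition ker1 :: "('x1 \<Rightarrow> 'a \<Rightarrow> 'x1) \<Rightarrow> ('a list \<times> 'a list) set" where
  "ker1 d1 = {(u, v). \<forall>x. delta1w d1 x u = delta1w d1 x v}"

definition ker_lasso ::
  "('x1 \<Rightarrow> 'a \<Rightarrow> 'x1) \<Rightarrow> ('x1 \<Rightarrow> 'a \<Rightarrow> 'x2) \<Rightarrow> ('x2 \<Rightarrow> 'a \<Rightarrow> 'x2) \<Rightarrow>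
   (('a list \<times> 'a list) \<times> ('a list \<times> 'a list)) set" where
  "ker_lasso d1 d2 d3 = {(p, q). p \<in> lassos \<and> q \<in> lassos \<and>
      (\<forall>x. delta_lasso d1 d2 d3 x p = delta_lasso d1 d2 d3 x q)}"

definition bisim_congruence ::
  "('a list \<times> 'a list) set \<Rightarrow> (('a list \<times> 'a list) \<times> ('a list \<times> 'a list)) set \<Rightarrow> bool" where
  "bisim_congruence C1 C2 \<longleftrightarrow>
     equiv UNIV C1 \<and> equiv lassos C2 \<and>
     (\<forall>u u' v v'. (u, u') \<in> C1 \<and> (v, v') \<in> C1 \<longrightarrow> (u @ v, u' @ v') \<in> C1) \<and>
     (\<forall>w w' u v u' v'. (w, w') \<in> C1 \<and> ((u, v), (u', v')) \<in> C2 \<longrightarrow>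
         ((w @ u, v), (w' @ u', v')) \<in> C2) \<and>
     (\<forall>u u' a. (u, u') \<in> C1 \<longrightarrow> (u @ [a], u' @ [a]) \<in> C1 \<and> ((u, [a]), (u', [a])) \<in> C2) \<and>
     (\<forall>u v u' v' a. ((u, v), (u', v')) \<in> C2 \<longrightarrow> ((u, v @ [a]), (u', v' @ [a])) \<in> C2)"

end

theory Submission
  imports Defs
begin

text \<open>Both transition structures are monoid actions of words, so their kernels are compatible with
  concatenation on the left and extension by a letter on the right; this gives the congruence
  properties, without any reachability assumption.  A morphism commutes with the extended
  transitions, and reachability of the target makes its first component surjective, so every
  state of the target is an image and each equation valid at all states of the source is valid
  at all states of the target.\<close>

lemma delta1w_append: "delta1w d1 x (u @ v) = delta1w d1 (delta1w d1 x u) v"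
  by (simp add: delta1w_def)

lemma delta_lasso_append_stem:
  "delta_lasso d1 d2 d3 x (w @ u, v) = delta_lasso d1 d2 d3 (delta1w d1 x w) (u, v)"
  by (simp add: delta_lasso_def delta1w_append)

lemma delta_circ_snoc:
  "v \<noteq> [] \<Longrightarrow> delta_circ d2 d3 x (v @ [a]) = d3 (delta_circ d2 d3 x v) a"
  by (cases v) (simp_all add: delta3w_def)

lemma delta_lasso_snoc_loop:
  "v \<noteq> [] \<Longrightarrow> delta_lasso d1 d2 d3 x (u, v @ [a]) = d3 (delta_lasso d1 d2 d3 x (u, v)) a"
  by (simp add: delta_lasso_def delta_circ_snoc)

lemma bisim_congruence_kernels: "bisim_congruence (ker1 d1) (ker_lasso d1 d2 d3)"
  unfolding bisim_congruence_def
proof (intro conjI allI impI)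
  show "equiv UNIV (ker1 d1)"
    by (rule equivI) (auto simp: ker1_def refl_on_def sym_def trans_def)
  show "equiv lassos (ker_lasso d1 d2 d3)"
    by (rule equivI) (auto simp: ker_lasso_def refl_on_def sym_def trans_def)
next
  fix u u' v v' :: "'a list"
  assume "(u, u') \<in> ker1 d1 \<and> (v, v') \<in> ker1 d1"
  then show "(u @ v, u' @ v') \<in> ker1 d1"
    by (simp add: ker1_def delta1w_append)
next
  fix w w' u v u' v' :: "'a list"
  assume "(w, w') \<in> ker1 d1 \<and> ((u, v), u', v') \<in> ker_lasso d1 d2 d3"
  then show "((w @ u, v), w' @ u', v') \<in> ker_lasso d1 d2 d3"
    by (simp add: ker1_def ker_lasso_def lassos_def delta_lasso_append_stem)
next
  fix u u' :: "'a list" and a :: 'a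
  assume "(u, u') \<in> ker1 d1"
  then show "(u @ [a], u' @ [a]) \<in> ker1 d1"
    by (simp add: ker1_def delta1w_append)
next
  fix u u' :: "'a list" and a :: 'a
  assume "(u, u') \<in> ker1 d1"
  then show "((u, [a]), u', [a]) \<in> ker_lasso d1 d2 d3"
    by (simp add: ker1_def ker_lasso_def lassos_def delta_lasso_def)
next
  fix u v u' v' :: "'a list" and a :: 'a
  assume "((u, v), u', v') \<in> ker_lasso d1 d2 d3"
  then show "((u, v @ [a]), u', v' @ [a]) \<in> ker_lasso d1 d2 d3"
    by (simp add: ker_lasso_def lassos_def delta_lasso_snoc_loop)
qed

lemma delta1w_hom:
  assumes "\<And>x a. h1 (d1 x a) = e1 (h1 x) a"
  shows "h1 (delta1w d1 x u) = delta1w e1 (h1 x) u"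
  unfolding delta1w_def using assms by (induction u arbitrary: x) simp_all

lemma delta3w_hom:
  assumes "\<And>y a. h2 (d3 y a) = e3 (h2 y) a"
  shows "h2 (delta3w d3 y v) = delta3w e3 (h2 y) v"
  unfolding delta3w_def using assms by (induction v arbitrary: y) simp_all

lemma delta_lasso_hom:
  assumes "pla_morphism x0 d1 d2 d3 y0 e1 e2 e3 h1 h2" and "v \<noteq> []"
  shows "h2 (delta_lasso d1 d2 d3 x (u, v)) = delta_lasso e1 e2 e3 (h1 x) (u, v)"
proof -
  obtain a v' where "v = a # v'"
    using \<open>v \<noteq> []\<close> by (cases v) auto
  with assms(1) show ?thesis
    unfolding pla_morphism_def delta_lasso_def
    by (simp add: delta1w_hom delta3w_hom)
qed

lemma pla_morphism_surj_states:
  assumes "pla_morphism x0 d1 d2 d3 y0 e1 e2 e3 h1 h2" and "reachable_pla y0 e1 e2 e3"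
  shows "surj h1"
proof -
  have "y \<in> range h1" for y
  proof -
    obtain w where "y = delta1w e1 y0 w"
      using assms(2) unfolding reachable_pla_def by blast
    with assms(1) have "y = h1 (delta1w d1 x0 w)"
      unfolding pla_morphism_def by (simp add: delta1w_hom)
    then show ?thesis by blast
  qed
  then show ?thesis by blast
qed

lemma ker1_mono:
  assumes "surj h1" and "\<And>x a. h1 (d1 x a) = e1 (h1 x) a"
  shows "ker1 d1 \<subseteq> ker1 e1"
proof safe
  fix u v
  assume uv: "(u, v) \<in> ker1 d1"
  have hom_w: "h1 (delta1w d1 x w) = delta1w e1 (h1 x) w" for x w
    using assms(2) by (rule delta1w_hom)
  have "delta1w e1 y u = delta1w e1 y v" for y
  proof -
    from \<open>surj h1\<close> obtain x where "y = h1 x"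
      by (metis surjD)
    with uv show ?thesis
      by (simp add: ker1_def flip: hom_w)
  qed
  then show "(u, v) \<in> ker1 e1"
    by (simp add: ker1_def)
qed

lemma ker_lasso_mono:
  assumes "pla_morphism x0 d1 d2 d3 y0 e1 e2 e3 h1 h2" and "surj h1"
  shows "ker_lasso d1 d2 d3 \<subseteq> ker_lasso e1 e2 e3"
proof safe
  fix u v u' v'
  assume uv: "((u, v), (u', v')) \<in> ker_lasso d1 d2 d3"
  then have "(u, v) \<in> lassos" "(u', v') \<in> lassos"
    by (simp_all add: ker_lasso_def)
  then have "v \<noteq> []" "v' \<noteq> []"
    by (simp_all add: lassos_def)
  have "delta_lasso e1 e2 e3 y (u, v) = delta_lasso e1 e2 e3 y (u', v')" for y
  proof -
    from \<open>surj h1\<close> obtain x where "y = h1 x"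
      by (metis surjD)
    with uv show ?thesis
      by (simp add: ker_lasso_def
          flip: delta_lasso_hom[OF assms(1) \<open>v \<noteq> []\<close>] delta_lasso_hom[OF assms(1) \<open>v' \<noteq> []\<close>])
  qed
  with \<open>(u, v) \<in> lassos\<close> \<open>(u', v') \<in> lassos\<close>
  show "((u, v), (u', v')) \<in> ker_lasso e1 e2 e3"
    by (simp add: ker_lasso_def)
qed

theorem mainTheorem10:
  fixes x0 :: "'x1" and d1 :: "'x1 \<Rightarrow> 'a::finite \<Rightarrow> 'x1"
    and d2 :: "'x1 \<Rightarrow> 'a \<Rightarrow> 'x2" and d3 :: "'x2 \<Rightarrow> 'a \<Rightarrow> 'x2"
  shows "(reachable_pla x0 d1 d2 d3 \<longrightarrow>
            bisim_congruence (ker1 d1) (ker_lasso d1 d2 d3)) \<and>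
         (\<forall>(y0 :: 'y1) (e1 :: 'y1 \<Rightarrow> 'a \<Rightarrow> 'y1) (e2 :: 'y1 \<Rightarrow> 'a \<Rightarrow> 'y2)
            (e3 :: 'y2 \<Rightarrow> 'a \<Rightarrow> 'y2) h1 h2.
            reachable_pla x0 d1 d2 d3 \<and> reachable_pla y0 e1 e2 e3 \<and>
            pla_morphism x0 d1 d2 d3 y0 e1 e2 e3 h1 h2 \<longrightarrow>
            ker1 d1 \<subseteq> ker1 e1 \<and> ker_lasso d1 d2 d3 \<subseteq> ker_lasso e1 e2 e3)"
proof (intro conjI impI allI)
  show "bisim_congruence (ker1 d1) (ker_lasso d1 d2 d3)"
    by (rule bisim_congruence_kernels)
next
  fix y0 :: 'y1 and e1 :: "'y1 \<Rightarrow> 'a \<Rightarrow> 'y1" and e2 :: "'y1 \<Rightarrow> 'a \<Rightarrow> 'y2"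
    and e3 :: "'y2 \<Rightarrow> 'a \<Rightarrow> 'y2" and h1 h2
  assume "reachable_pla x0 d1 d2 d3 \<and> reachable_pla y0 e1 e2 e3 \<and>
          pla_morphism x0 d1 d2 d3 y0 e1 e2 e3 h1 h2"
  then have hom: "pla_morphism x0 d1 d2 d3 y0 e1 e2 e3 h1 h2"
    and "reachable_pla y0 e1 e2 e3"
    by simp_all
  then have "surj h1"
    by (rule pla_morphism_surj_states)
  from hom have "\<And>x a. h1 (d1 x a) = e1 (h1 x) a"
    by (simp add: pla_morphism_def)
  with \<open>surj h1\<close> show "ker1 d1 \<subseteq> ker1 e1"
    by (rule ker1_mono)
  from hom \<open>surj h1\<close> show "ker_lasso d1 d2 d3 \<subseteq> ker_lasso e1 e2 e3"
    by (rule ker_lasso_mono)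
qed

end
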